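(* Let $g\ge1$, $n=g+1$, $k\in\{1,\dots,g\}$, $I_k=\{1,\dots,k\}$. Define the rational map $\tilde\psi_{[\mathbf k],v_1}:\mathbb C^{2g+1}\dashrightarrow(\mathbb C^* )^{\binom nk}\times\mathbb{WP}^{3g-1}$, $(\lambda_1,\dots,\lambda_g,\kappa_1,\dots,\kappa_n)\mapsto((\alpha_J)_{J\in\binom{[n]}k},(\mathbf U,\mathbf V,\mathbf W))$ by $$\alpha_J=\frac{\tilde A_JK_J}{\tilde A_{I_k}K_{I_k}}=\frac{K_J^2}{K_{I_k}^2}\prod_{l=1}^g\lambda_l^{(B^T\mathbf c_J)_{l+1}},\qquad[\mathbf U\ \mathbf V\ \mathbf W]=BK.$$ Then the Zariski closure of the image of $\tilde\psi_{[\mathbf k],v_1}$ equals $\mathcal H_{\Gamma,[\mathbf k],v_1}$, the Zariski closure of the image of the map $\psi_{[\mathbf k],v_1}(\beta,\kappa)=((\alpha_I)_I,(\mathbf U,\mathbf V,\mathbf W))$ with $\alpha_I=a_{\mathbf c_I}(\kappa)\prod_l\beta_l^{(\mathbf c_I)_l}$ and $[\mathbf U\ \mathbf V\ \mathbf W]=BK$; i.e. the two parametrizations are equivalent.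
   Context: $B\in\mathbb Z^{g\times n}$ has $B_{i,1}=1$, $B_{i,i+1}=-1$, other entries $0$; $K$ is the $n\times 3$ matrix $K_{ij}=\kappa_i^j$; $\mathbb{WP}^{3g-1}$ has coordinates $(\mathbf U,\mathbf V,\mathbf W)$ of weights $1,2,3$. $\tilde A=V\cdot\mathrm{diag}(1,\lambda_1,\dots,\lambda_g)$ with $V_{ij}=\kappa_j^{i-1}$ ($k\times n$), $\tilde A_J$ its maximal minor on columns $J$, and $K_J=\prod_{i<j\in J}(\kappa_j-\kappa_i)$. Let $\mathbf s\in\mathbb R^n$ have first $k$ entries $1$, rest $0$; for a $k$-subset $I$, $\mathbf c_I\in\mathbb Z^g$ is the unique vector with $B^T\mathbf c_I+\mathbf s=\mathbf 1_I$. For $\mathbf c\in\mathbb Z^g$, $a_{\mathbf c}(\kappa)=\prod_{i}(\kappa_{i+1}-\kappa_1)^{-2c_i^2}\prod_{i<j}\big(\frac{(\kappa_{i+1}-\kappa_{j+1})^2}{(\kappa_{i+1}-\kappa_1)^2(\kappa_{j+1}-\kappa_1)^2}\big)^{c_ic_j}$. $\mathcal H_{\Gamma,[\mathbf k],v_1}$ is the Hirota variety component of the genus-$g$ banana graph parametrizing KP multi-solitons from degenerate hyperelliptic curves. *)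

theory Defs
  imports Complex_Main "HOL-Combinatorics.Permutations"
begin

text \<open>Points of the ambient affine space are functions from a set of coordinate
  names to the complex numbers (coordinates outside C are set to 0).\<close>

inductive poly_fun :: "'i set \<Rightarrow> (('i \<Rightarrow> complex) \<Rightarrow> complex) \<Rightarrow> bool" for C where
  pf_const: "poly_fun C (\<lambda>x. c)"
| pf_var: "i \<in> C \<Longrightarrow> poly_fun C (\<lambda>x. x i)"
| pf_add: "poly_fun C p \<Longrightarrow> poly_fun C q \<Longrightarrow> poly_fun C (\<lambda>x. p x + q x)"
| pf_mult: "poly_fun C p \<Longrightarrow> poly_fun C q \<Longrightarrow> poly_fun C (\<lambda>x. p x * q x)"

definition zariski_closure :: "'i set \<Rightarrow> ('i \<Rightarrow> complex) set \<Rightarrow> ('i \<Rightarrow> complex) set" where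
  "zariski_closure C S =
     {x. (\<forall>i. i \<notin> C \<longrightarrow> x i = 0) \<and>
         (\<forall>p. poly_fun C p \<longrightarrow> (\<forall>y\<in>S. p y = 0) \<longrightarrow> p x = 0)}"

text \<open>Al J is the Pluecker-type coordinate alpha_J; Crd j i is the (i,j) entry of
  the g x 3 matrix [U V W] (j = 1,2,3 for U,V,W, of weight j).\<close>

datatype coord = Al "nat set" | Crd nat nat

definition ksubsets :: "nat \<Rightarrow> nat \<Rightarrow> nat set set" where
  "ksubsets n k = {J. J \<subseteq> {1..n} \<and> card J = k}"

definition coords :: "nat \<Rightarrow> nat \<Rightarrow> coord set" where
  "coords g k = Al ` ksubsets (g+1) k \<union> {Crd j i | j i. j \<in> {1,2,3} \<and> i \<in> {1..g}}"

text \<open>Affine cone over (C^*)^(n choose k) x WP^(3g-1): all alpha_J nonzero and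
  (U,V,W) not identically zero.\<close>
definition target :: "nat \<Rightarrow> nat \<Rightarrow> (coord \<Rightarrow> complex) set" where
  "target g k = {x. (\<forall>J\<in>ksubsets (g+1) k. x (Al J) \<noteq> 0) \<and>
                    (\<exists>j\<in>{1,2,3}. \<exists>i\<in>{1..g}. x (Crd j i) \<noteq> 0)}"

definition Bmat :: "nat \<Rightarrow> nat \<Rightarrow> int" where
  "Bmat i m = (if m = 1 then 1 else if m = i + 1 then -1 else 0)"

definition Kmat :: "(nat \<Rightarrow> complex) \<Rightarrow> nat \<Rightarrow> nat \<Rightarrow> complex" where
  "Kmat kap m j = kap m ^ j"

definition BK :: "nat \<Rightarrow> (nat \<Rightarrow> complex) \<Rightarrow> nat \<Rightarrow> nat \<Rightarrow> complex" where
  "BK g kap i j = (\<Sum>m=1..g+1. of_int (Bmat i m) * Kmat kap m j)"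

definition BTc :: "nat \<Rightarrow> (nat \<Rightarrow> int) \<Rightarrow> nat \<Rightarrow> int" where
  "BTc g c m = (\<Sum>i=1..g. Bmat i m * c i)"

definition svec :: "nat \<Rightarrow> nat \<Rightarrow> int" where
  "svec k m = (if 1 \<le> m \<and> m \<le> k then 1 else 0)"

definition indic :: "nat set \<Rightarrow> nat \<Rightarrow> int" where
  "indic J m = (if m \<in> J then 1 else 0)"

definition cvec :: "nat \<Rightarrow> nat \<Rightarrow> nat set \<Rightarrow> nat \<Rightarrow> int" where
  "cvec g k J = (THE c. (\<forall>m\<in>{1..g+1}. BTc g c m + svec k m = indic J m) \<and>
                        (\<forall>i. i \<notin> {1..g} \<longrightarrow> c i = 0))"

definition KJ :: "(nat \<Rightarrow> complex) \<Rightarrow> nat set \<Rightarrow> complex" where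
  "KJ kap J = (\<Prod>(i,j)\<in>{(i,j). i \<in> J \<and> j \<in> J \<and> i < j}. kap j - kap i)"

text \<open>tilde A = V diag(1, lambda_1, ..., lambda_g), a k x n matrix (1-based).\<close>
definition Atilde :: "(nat \<Rightarrow> complex) \<Rightarrow> (nat \<Rightarrow> complex) \<Rightarrow> nat \<Rightarrow> nat \<Rightarrow> complex" where
  "Atilde lam kap i j = kap j ^ (i - 1) * (if j = 1 then 1 else lam (j - 1))"

definition minor :: "nat \<Rightarrow> (nat \<Rightarrow> nat \<Rightarrow> complex) \<Rightarrow> nat set \<Rightarrow> complex" where
  "minor k A J = (let cols = sorted_list_of_set J in
     \<Sum>p | p permutes {1..k}. of_int (sign p) * (\<Prod>i=1..k. A i (cols ! (p i - 1))))"

definition alpha_tilde :: "nat \<Rightarrow> (nat \<Rightarrow> complex) \<Rightarrow> (nat \<Rightarrow> complex) \<Rightarrow> nat set \<Rightarrow> complex" where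
  "alpha_tilde k lam kap J =
     (minor k (Atilde lam kap) J * KJ kap J) / (minor k (Atilde lam kap) {1..k} * KJ kap {1..k})"

definition alpha_tilde_expl :: "nat \<Rightarrow> nat \<Rightarrow> (nat \<Rightarrow> complex) \<Rightarrow> (nat \<Rightarrow> complex) \<Rightarrow> nat set \<Rightarrow> complex" where
  "alpha_tilde_expl g k lam kap J =
     (KJ kap J)^2 / (KJ kap {1..k})^2 * (\<Prod>l=1..g. lam l powi (BTc g (cvec g k J) (l+1)))"

definition a_coef :: "nat \<Rightarrow> (nat \<Rightarrow> int) \<Rightarrow> (nat \<Rightarrow> complex) \<Rightarrow> complex" where
  "a_coef g c kap =
     (\<Prod>i=1..g. (kap (i+1) - kap 1) powi (-2 * (c i)^2)) *
     (\<Prod>(i,j)\<in>{(i,j). 1 \<le> i \<and> i < j \<and> j \<le> g}.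
        ((kap (i+1) - kap (j+1))^2 / ((kap (i+1) - kap 1)^2 * (kap (j+1) - kap 1)^2))
          powi (c i * c j))"

definition alpha_psi :: "nat \<Rightarrow> nat \<Rightarrow> (nat \<Rightarrow> complex) \<Rightarrow> (nat \<Rightarrow> complex) \<Rightarrow> nat set \<Rightarrow> complex" where
  "alpha_psi g k beta kap J =
     a_coef g (cvec g k J) kap * (\<Prod>l=1..g. beta l powi (cvec g k J l))"

text \<open>Parameter domain: the torus parameters (lambda resp. beta) nonzero and the
  kappa_i pairwise distinct (a dense open set where both maps are defined and land
  in (C^*)^(n choose k) x WP^(3g-1)).\<close>
definition params_ok :: "nat \<Rightarrow> (nat \<Rightarrow> complex) \<Rightarrow> (nat \<Rightarrow> complex) \<Rightarrow> bool" where
  "params_ok g f kap \<longleftrightarrow> (\<forall>l\<in>{1..g}. f l \<noteq> 0) \<and> inj_on kap {1..g+1}"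

text \<open>Point of the affine cone: alpha coordinates, and t . (U,V,W) with weights 1,2,3.\<close>
definition cone_pt :: "nat \<Rightarrow> nat \<Rightarrow> (nat set \<Rightarrow> complex) \<Rightarrow> (nat \<Rightarrow> complex) \<Rightarrow> complex
                        \<Rightarrow> coord \<Rightarrow> complex" where
  "cone_pt g k alpha kap t x = (case x of
      Al J \<Rightarrow> (if J \<in> ksubsets (g+1) k then alpha J else 0)
    | Crd j i \<Rightarrow> (if j \<in> {1,2,3} \<and> i \<in> {1..g} then t ^ j * BK g kap i j else 0))"

definition psi_tilde_cone :: "nat \<Rightarrow> nat \<Rightarrow> (coord \<Rightarrow> complex) set" where
  "psi_tilde_cone g k = {cone_pt g k (alpha_tilde k lam kap) kap t | lam kap t.
                          params_ok g lam kap \<and> t \<noteq> 0}"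

definition psi_cone :: "nat \<Rightarrow> nat \<Rightarrow> (coord \<Rightarrow> complex) set" where
  "psi_cone g k = {cone_pt g k (alpha_psi g k beta kap) kap t | beta kap t.
                    params_ok g beta kap \<and> t \<noteq> 0}"

end

theory Submission
  imports Defs "Jordan_Normal_Form.Determinant"
begin

(* Factoring the column weights diag(1, lambda_1, ..., lambda_g) out of tilde A leaves a
   Vandermonde minor, so tilde A_J = K_J * prod_{j in J} lambda_{j-1}; dividing by the same
   expression for I_k gives the explicit formula for alpha_J.

   For the comparison with psi, K_J^2 = prod_{a<b} ((kappa_b - kappa_a)^2)^(w_a w_b) with
   w = 1_J is a quadratic form in the exponent. Splitting 1_J = s + B^T c_J factors it as
   K_{I_k}^2 * Q(B^T c_J) * L(s, B^T c_J), where Q(B^T c) = a_c(kappa) and the polarization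
   L(s, B^T c) = prod_l f_l(kappa)^(c_l) is multiplicative in c. Since (B^T c)_{l+1} = -c_l,
   alpha_J = a_{c_J}(kappa) * prod_l (f_l(kappa) / lambda_l)^((c_J)_l). So beta_l =
   f_l(kappa) / lambda_l is an invertible change of torus coordinates carrying one
   parametrization to the other: the two images coincide, hence so do their closures. *)

lemma power_int_sum:
  fixes x :: "'a::field"
  assumes "x \<noteq> 0"
  shows "x powi (\<Sum>i\<in>A. f i) = (\<Prod>i\<in>A. x powi f i)"
proof (induction A rule: infinite_finite_induct)
  case (insert a A)
  then show ?case
    using assms by (simp add: power_int_add)
qed simp_all

lemma prod_power_int_distrib:
  fixes f :: "'i \<Rightarrow> 'a::field"
  shows "(\<Prod>i\<in>A. f i) powi n = (\<Prod>i\<in>A. f i powi n)"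
proof (induction A rule: infinite_finite_induct)
  case (insert a A)
  then show ?case
    by (simp add: power_int_mult_distrib)
qed simp_all

lemma prod_atLeast1_atMost_add1:
  fixes f :: "nat \<Rightarrow> 'a::comm_monoid_mult"
  shows "(\<Prod>j=1..n+1. f j) = f 1 * (\<Prod>l=1..n. f (l+1))"
  by (induction n) (simp_all add: mult_ac)

lemma prod_power_int_sum_square:
  fixes X :: "nat \<Rightarrow> 'a::field"
  assumes X: "\<And>i. i \<in> {1..g} \<Longrightarrow> X i \<noteq> 0"
  shows "(\<Prod>i=1..g. X i powi (c i * c i)) *
         (\<Prod>(i,j)\<in>{(i,j). 1 \<le> i \<and> i < j \<and> j \<le> g}. (X i * X j) powi (c i * c j)) =
         (\<Prod>i=1..g. X i powi (c i * (\<Sum>j=1..g. c j)))"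
proof -
  let ?P = "{(i,j). 1 \<le> i \<and> i < j \<and> j \<le> g}"
  have upper: "(\<Prod>(i,j)\<in>?P. F i j) = (\<Prod>i=1..g. \<Prod>j\<in>{i<..g}. F i j)"
    for F :: "nat \<Rightarrow> nat \<Rightarrow> 'a"
  proof -
    have "?P = (SIGMA i:{1..g}. {i<..g})"
      by auto
    then show ?thesis
      by (simp add: prod.Sigma)
  qed
  have lower: "(\<Prod>(i,j)\<in>?P. F i j) = (\<Prod>j=1..g. \<Prod>i\<in>{1..<j}. F i j)"
    for F :: "nat \<Rightarrow> nat \<Rightarrow> 'a"
  proof -
    have "?P = prod.swap ` (SIGMA j:{1..g}. {1..<j})"
      by (auto simp: image_iff)
    then show ?thesis
      by (simp add: prod.reindex prod.Sigma case_prod_unfold)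
  qed
  have split_sum: "c i * (\<Sum>j=1..g. c j) = c i * c i + (\<Sum>j\<in>{i<..g}. c i * c j) + (\<Sum>j\<in>{1..<i}. c j * c i)"
    if "i \<in> {1..g}" for i
  proof -
    have "{1..g} = {1..<i} \<union> insert i {i<..g}" and "{1..<i} \<inter> insert i {i<..g} = {}"
      using that by auto
    then have "(\<Sum>j=1..g. c j) = (\<Sum>j\<in>{1..<i}. c j) + (c i + (\<Sum>j\<in>{i<..g}. c j))"
      by (simp add: sum.union_disjoint)
    then show ?thesis
      by (simp add: sum_distrib_left sum_distrib_right algebra_simps)
  qed
  have "(\<Prod>(i,j)\<in>?P. (X i * X j) powi (c i * c j)) =
        (\<Prod>(i,j)\<in>?P. X i powi (c i * c j)) * (\<Prod>(i,j)\<in>?P. X j powi (c i * c j))"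
    by (simp add: power_int_mult_distrib prod.distrib case_prod_unfold)
  also have "\<dots> = (\<Prod>i=1..g. X i powi (\<Sum>j\<in>{i<..g}. c i * c j)) *
                  (\<Prod>i=1..g. X i powi (\<Sum>j\<in>{1..<i}. c j * c i))"
    by (simp only: upper[of "\<lambda>i j. X i powi (c i * c j)"] lower[of "\<lambda>i j. X j powi (c i * c j)"])
       (simp add: power_int_sum X)
  finally have cross: "(\<Prod>(i,j)\<in>?P. (X i * X j) powi (c i * c j)) =
      (\<Prod>i=1..g. X i powi (\<Sum>j\<in>{i<..g}. c i * c j) * X i powi (\<Sum>j\<in>{1..<i}. c j * c i))"
    by (simp add: prod.distrib)
  have "X i powi (c i * c i) * (X i powi (\<Sum>j\<in>{i<..g}. c i * c j) * X i powi (\<Sum>j\<in>{1..<i}. c j * c i)) =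
        X i powi (c i * (\<Sum>j=1..g. c j))" if "i \<in> {1..g}" for i
    unfolding split_sum[OF that] using X[OF that] by (simp add: power_int_add)
  then show ?thesis
    unfolding cross prod.distrib[symmetric] by (intro prod.cong) auto
qed

definition quad_prod :: "('i \<times> 'i) set \<Rightarrow> ('i \<Rightarrow> 'i \<Rightarrow> 'a::field) \<Rightarrow> ('i \<Rightarrow> int) \<Rightarrow> 'a" where
  "quad_prod P q w = (\<Prod>(a,b)\<in>P. q a b powi (w a * w b))"

definition polar_prod ::
  "('i \<times> 'i) set \<Rightarrow> ('i \<Rightarrow> 'i \<Rightarrow> 'a::field) \<Rightarrow> ('i \<Rightarrow> int) \<Rightarrow> ('i \<Rightarrow> int) \<Rightarrow> 'a" where
  "polar_prod P q w z = (\<Prod>(a,b)\<in>P. q a b powi (w a * z b + z a * w b))"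

lemma quad_prod_add:
  assumes "\<And>a b. (a,b) \<in> P \<Longrightarrow> q a b \<noteq> 0"
  shows "quad_prod P q (\<lambda>m. w m + z m) = quad_prod P q w * quad_prod P q z * polar_prod P q w z"
proof -
  have "q a b powi ((w a + z a) * (w b + z b)) =
        q a b powi (w a * w b) * q a b powi (z a * z b) * q a b powi (w a * z b + z a * w b)"
    if "(a,b) \<in> P" for a b
    using assms[OF that] by (simp add: power_int_add[symmetric] algebra_simps)
  then show ?thesis
    unfolding quad_prod_def polar_prod_def prod.distrib[symmetric]
    by (intro prod.cong) auto
qed

lemma polar_prod_sum:
  assumes "\<And>a b. (a,b) \<in> P \<Longrightarrow> q a b \<noteq> 0"
  shows "polar_prod P q w (\<lambda>m. \<Sum>l\<in>L. c l * z l m) = (\<Prod>l\<in>L. polar_prod P q w (z l) powi c l)"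
proof -
  have "q a b powi (w a * (\<Sum>l\<in>L. c l * z l b) + (\<Sum>l\<in>L. c l * z l a) * w b) =
        (\<Prod>l\<in>L. (q a b powi (w a * z l b + z l a * w b)) powi c l)"
    if "(a,b) \<in> P" for a b
  proof -
    have "w a * (\<Sum>l\<in>L. c l * z l b) + (\<Sum>l\<in>L. c l * z l a) * w b =
          (\<Sum>l\<in>L. (w a * z l b + z l a * w b) * c l)"
      by (simp add: sum_distrib_left sum_distrib_right sum.distrib[symmetric] algebra_simps)
    then show ?thesis
      using assms[OF that] by (simp add: power_int_sum power_int_mult)
  qed
  then have "polar_prod P q w (\<lambda>m. \<Sum>l\<in>L. c l * z l m) =
             (\<Prod>x\<in>P. \<Prod>l\<in>L.
                (q (fst x) (snd x) powi (w (fst x) * z l (snd x) + z l (fst x) * w (snd x))) powi c l)"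
    unfolding polar_prod_def case_prod_unfold by (intro prod.cong) auto
  also have "\<dots> = (\<Prod>l\<in>L. \<Prod>x\<in>P.
                (q (fst x) (snd x) powi (w (fst x) * z l (snd x) + z l (fst x) * w (snd x))) powi c l)"
    by (rule prod.swap)
  also have "\<dots> = (\<Prod>l\<in>L. polar_prod P q w (z l) powi c l)"
    by (simp add: polar_prod_def prod_power_int_distrib case_prod_unfold)
  finally show ?thesis .
qed

lemma polar_prod_nonzero:
  assumes "\<And>a b. (a,b) \<in> P \<Longrightarrow> q a b \<noteq> 0"
  shows "polar_prod P q w z \<noteq> 0"
  using assms by (cases "finite P") (auto simp: polar_prod_def)

section \<open>Vandermonde minors\<close>

lemma det_scale_cols:
  assumes A: "A \<in> carrier_mat n n"
  shows "det (mat n n (\<lambda>(i,j). c j * A $$ (i,j))) = (\<Prod>j<n. c j) * det A"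
proof -
  have "det (mat n n (\<lambda>(i,j). c j * A $$ (i,j))) =
        (\<Sum>p | p permutes {0..<n}. of_int (sign p) * (\<Prod>i=0..<n. c (p i) * A $$ (i, p i)))"
    by (subst det_def'[of _ n]) auto
  also have "\<dots> = (\<Sum>p | p permutes {0..<n}. (\<Prod>j<n. c j) * (of_int (sign p) * (\<Prod>i=0..<n. A $$ (i, p i))))"
  proof (rule sum.cong[OF refl])
    fix p assume "p \<in> {p. p permutes {0..<n}}"
    then have "(\<Prod>i=0..<n. c (p i)) = (\<Prod>j<n. c j)"
      using prod.permute[of p "{0..<n}" c] by (simp add: comp_def atLeast0LessThan)
    then show "of_int (sign p) * (\<Prod>i=0..<n. c (p i) * A $$ (i, p i)) =
               (\<Prod>j<n. c j) * (of_int (sign p) * (\<Prod>i=0..<n. A $$ (i, p i)))"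
      by (simp add: prod.distrib mult_ac)
  qed
  also have "\<dots> = (\<Prod>j<n. c j) * det A"
    by (simp add: det_def'[OF A] sum_distrib_left)
  finally show ?thesis .
qed

lemma vandermonde_det:
  "det (mat n n (\<lambda>(i,j). x j ^ i)) = (\<Prod>j<n. \<Prod>i<j. x j - x i :: 'a :: comm_ring_1)"
proof (induction n arbitrary: x)
  case 0
  show ?case by simp
next
  case (Suc m)
  define V where "V = mat (Suc m) (Suc m) (\<lambda>(i,j). x j ^ i)"
  \<comment> \<open>Subtracting x 0 times each row from the next one clears the first column of V below its 1.\<close>
  define E where "E = mat (Suc m) (Suc m)
    (\<lambda>(i,j). (if i = j then 1 else 0) + (if i = Suc j then - x 0 else 0))"
  have V: "V \<in> carrier_mat (Suc m) (Suc m)" and E: "E \<in> carrier_mat (Suc m) (Suc m)"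
    by (auto simp: V_def E_def)
  define W where "W = E * V"
  have W: "W \<in> carrier_mat (Suc m) (Suc m)"
    using E V by (simp add: W_def)
  have W_entry: "W $$ (i,j) = (if i = 0 then 1 else x j ^ (i-1) * (x j - x 0))"
    if "i < Suc m" "j < Suc m" for i j
  proof -
    have "W $$ (i,j) =
          (\<Sum>l<Suc m. (if l = i then x j ^ l else 0) + (if Suc l = i then - x 0 * x j ^ l else 0))"
      using that E V unfolding W_def
      by (auto simp: scalar_prod_def E_def V_def atLeast0LessThan distrib_right intro!: sum.cong)
    also have "\<dots> = (if i = 0 then 1 else x j ^ (i-1) * (x j - x 0))"
      using that by (cases i) (auto simp: sum.distrib algebra_simps dest: Suc_lessI)
    finally show ?thesis .
  qed
  have "diag_mat E = map (\<lambda>_. 1) [0..<Suc m]"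
    by (auto simp: E_def diag_mat_def)
  then have "det E = 1"
    by (subst det_lower_triangular[OF _ E]) (auto simp: E_def map_replicate_const)
  then have "det V = det W"
    using det_mult[OF E V] by (simp add: W_def)
  also have "\<dots> = (\<Sum>i<Suc m. W $$ (i,0) * cofactor W i 0)"
    using W by (intro laplace_expansion_column) auto
  also have "\<dots> = det (mat_delete W 0 0)"
    by (simp add: sum.lessThan_Suc_shift W_entry cofactor_def del: sum.lessThan_Suc)
  also have "mat_delete W 0 0 =
      mat m m (\<lambda>(i,j). (x (Suc j) - x 0) * mat m m (\<lambda>(i,j). x (Suc j) ^ i) $$ (i,j))"
    using W by (intro eq_matI) (auto simp: mat_delete_def W_entry mult.commute)
  also have "det \<dots> = (\<Prod>j<m. x (Suc j) - x 0) * (\<Prod>j<m. \<Prod>i<j. x (Suc j) - x (Suc i))"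
    by (subst det_scale_cols) (auto simp: Suc.IH)
  finally show ?case
    by (simp add: V_def prod.lessThan_Suc_shift prod.distrib del: prod.lessThan_Suc)
qed

lemma prod_pairs_sorted_list_of_set:
  fixes J :: "'a::linorder set" and f :: "'a \<Rightarrow> 'a \<Rightarrow> 'b::comm_monoid_mult"
  assumes "finite J"
  shows "(\<Prod>j<card J. \<Prod>i<j. f (sorted_list_of_set J ! i) (sorted_list_of_set J ! j)) =
         (\<Prod>(a,b) \<in> {(a,b). a \<in> J \<and> b \<in> J \<and> a < b}. f a b)"
proof -
  define s where "s = sorted_list_of_set J"
  have len: "length s = card J" and set: "set s = J" and dist: "distinct s"
    and sorted: "sorted_wrt (<) s"
    using assms by (auto simp: s_def strict_sorted_list_of_set)
  have "bij_betw (\<lambda>(j,i). (s ! i, s ! j)) (SIGMA j:{..<card J}. {..<j})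
          {(a,b). a \<in> J \<and> b \<in> J \<and> a < b}"
  proof (rule bij_betwI')
    fix x y assume "x \<in> (SIGMA j:{..<card J}. {..<j})" "y \<in> (SIGMA j:{..<card J}. {..<j})"
    then show "((\<lambda>(j,i). (s ! i, s ! j)) x = (\<lambda>(j,i). (s ! i, s ! j)) y) = (x = y)"
      using dist len by (auto simp: nth_eq_iff_index_eq)
  next
    fix x assume "x \<in> (SIGMA j:{..<card J}. {..<j})"
    then show "(\<lambda>(j,i). (s ! i, s ! j)) x \<in> {(a,b). a \<in> J \<and> b \<in> J \<and> a < b}"
      using len sorted_wrt_nth_less[OF sorted] by (auto simp flip: set)
  next
    fix y assume "y \<in> {(a,b). a \<in> J \<and> b \<in> J \<and> a < b}"
    then obtain i j where y: "y = (s ! i, s ! j)" "i < card J" "j < card J" "s ! i < s ! j"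
      by (auto simp: in_set_conv_nth len simp flip: set)
    then have "i < j"
      using sorted_wrt_nth_less[OF sorted, of j i] len
      by (metis less_asym linorder_neqE_nat)
    then show "\<exists>x \<in> (SIGMA j:{..<card J}. {..<j}). y = (\<lambda>(j,i). (s ! i, s ! j)) x"
      using y by auto
  qed
  then have "(\<Prod>(a,b) \<in> {(a,b). a \<in> J \<and> b \<in> J \<and> a < b}. f a b) =
             (\<Prod>(j,i) \<in> (SIGMA j:{..<card J}. {..<j}). f (s ! i) (s ! j))"
    by (subst prod.reindex_bij_betw[symmetric]) (auto simp: case_prod_unfold)
  also have "\<dots> = (\<Prod>j<card J. \<Prod>i<j. f (s ! i) (s ! j))"
    by (rule prod.Sigma[symmetric]) auto
  finally show ?thesis
    by (simp add: s_def)
qed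

lemma minor_eq_det:
  "minor k A J = det (mat k k (\<lambda>(i,j). A (Suc i) (sorted_list_of_set J ! j)))"
proof -
  define s where "s = sorted_list_of_set J"
  define summand where "summand q = of_int (sign q) * (\<Prod>i=1..k. A i (s ! (q i - 1)))" for q
  define shift where
    "shift \<pi> x = (if x \<in> {1..k} then Suc (\<pi> (inv_into {0..<k} Suc x)) else x)" for \<pi> x
  have Suc_image: "Suc ` {0..<k} = {1..k}"
    by (simp add: atLeastLessThanSuc_atLeastAtMost)
  have shift_bij: "bij_betw shift {\<pi>. \<pi> permutes {0..<k}} {\<pi>. \<pi> permutes {1..k}}"
    unfolding shift_def
    by (rule bij_betw_permutations) (simp add: bij_betw_def atLeastLessThanSuc_atLeastAtMost)
  have shift_map: "shift \<pi> = map_permutation {0..<k} Suc \<pi>" for \<pi>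
    by (auto simp: fun_eq_iff shift_def map_permutation_def restrict_id_def Suc_image)
  have "minor k A J = sum summand {\<pi>. \<pi> permutes {1..k}}"
    by (simp add: minor_def summand_def s_def)
  also have "\<dots> = (\<Sum>\<pi> | \<pi> permutes {0..<k}. summand (shift \<pi>))"
    by (rule sum.reindex_bij_betw[OF shift_bij, symmetric])
  also have "\<dots> = (\<Sum>\<pi> | \<pi> permutes {0..<k}. of_int (sign \<pi>) * (\<Prod>i=0..<k. A (Suc i) (s ! \<pi> i)))"
  proof (rule sum.cong[OF refl])
    fix \<pi> assume "\<pi> \<in> {\<pi>. \<pi> permutes {0..<k}}"
    then have "sign (shift \<pi>) = sign \<pi>"
      by (simp add: shift_map sign_map_permutation)
    moreover have "(\<Prod>i=1..k. A i (s ! (shift \<pi> i - 1))) = (\<Prod>i=0..<k. A (Suc i) (s ! \<pi> i))"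
      using prod.shift_bounds_Suc_ivl[of "\<lambda>i. A i (s ! (shift \<pi> i - 1))" 0 k]
      by (simp add: atLeastLessThanSuc_atLeastAtMost shift_def inv_into_f_f)
    ultimately show "summand (shift \<pi>) = of_int (sign \<pi>) * (\<Prod>i=0..<k. A (Suc i) (s ! \<pi> i))"
      by (simp add: summand_def)
  qed
  also have "\<dots> = det (mat k k (\<lambda>(i,j). A (Suc i) (s ! j)))"
    by (auto simp: det_def'[of _ k] permutes_in_image intro!: sum.cong prod.cong)
  finally show ?thesis
    by (simp add: s_def)
qed

definition lam_diag :: "(nat \<Rightarrow> complex) \<Rightarrow> nat \<Rightarrow> complex" where
  "lam_diag lam j = (if j = 1 then 1 else lam (j - 1))"

lemma minor_Atilde:
  assumes "finite J"
  shows "minor (card J) (Atilde lam kap) J = KJ kap J * (\<Prod>j\<in>J. lam_diag lam j)"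
proof -
  define s where "s = sorted_list_of_set J"
  have len: "length s = card J" and set: "set s = J" and dist: "distinct s"
    using assms by (auto simp: s_def)
  have "mat (card J) (card J) (\<lambda>(i,j). Atilde lam kap (Suc i) (s ! j)) =
        mat (card J) (card J) (\<lambda>(i,j). lam_diag lam (s ! j) *
               mat (card J) (card J) (\<lambda>(i,j). kap (s ! j) ^ i) $$ (i,j))"
    by (intro eq_matI) (auto simp: Atilde_def lam_diag_def)
  then have "minor (card J) (Atilde lam kap) J =
        det (mat (card J) (card J) (\<lambda>(i,j). lam_diag lam (s ! j) *
               mat (card J) (card J) (\<lambda>(i,j). kap (s ! j) ^ i) $$ (i,j)))"
    by (simp add: minor_eq_det s_def)
  also have "\<dots> = (\<Prod>j<card J. lam_diag lam (s ! j)) * (\<Prod>j<card J. \<Prod>i<j. kap (s ! j) - kap (s ! i))"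
    by (simp add: det_scale_cols vandermonde_det)
  also have "(\<Prod>j<card J. lam_diag lam (s ! j)) = (\<Prod>j\<in>J. lam_diag lam j)"
    using prod.reindex_bij_betw[OF bij_betw_nth[OF dist refl refl], of "lam_diag lam"] len set
    by simp
  also have "(\<Prod>j<card J. \<Prod>i<j. kap (s ! j) - kap (s ! i)) = KJ kap J"
    unfolding KJ_def s_def by (rule prod_pairs_sorted_list_of_set[OF assms])
  finally show ?thesis
    by (simp add: mult.commute)
qed

lemma ksubsetsD:
  assumes "J \<in> ksubsets n k"
  shows "J \<subseteq> {1..n}" and "card J = k" and "{1..k} \<subseteq> {1..n}"
proof -
  show JS: "J \<subseteq> {1..n}" and card: "card J = k"
    using assms by (auto simp: ksubsets_def)
  then show "{1..k} \<subseteq> {1..n}"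
    using card_mono[OF _ JS] by auto
qed

lemma BTc_Suc:
  assumes "i \<in> {1..g}"
  shows "BTc g c (Suc i) = - c i"
proof -
  have "BTc g c (Suc i) = (\<Sum>l=1..g. if l = i then - c l else 0)"
    unfolding BTc_def using assms by (intro sum.cong) (auto simp: Bmat_def)
  then show ?thesis
    using assms by simp
qed

lemma BTc_1: "BTc g c 1 = (\<Sum>l=1..g. c l)"
  by (simp add: BTc_def Bmat_def)

lemma svec_eq_indic: "svec k = indic {1..k}"
  by (simp add: fun_eq_iff svec_def indic_def)

lemma sum_indic_Suc:
  assumes "S \<subseteq> {1..g+1}"
  shows "(\<Sum>l=1..g. indic S (Suc l)) = int (card S) - indic S 1"
proof -
  have indic: "indic S m = of_bool (m \<in> S)" for m
    by (simp add: indic_def)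
  have "{1..g+1} \<inter> {m. m \<in> S} = S"
    using assms by auto
  then have "int (card S) = (\<Sum>m=1..g+1. indic S m)"
    unfolding indic by (subst sum_of_bool_eq) simp_all
  also have "\<dots> = indic S 1 + (\<Sum>l=1..g. indic S (Suc l))"
    using sum.atLeast_Suc_atMost[of 1 "Suc g" "indic S"] sum.shift_bounds_cl_Suc_ivl[of "indic S" 1 g]
    by (simp del: sum.cl_ivl_Suc)
  finally show ?thesis
    by simp
qed

lemma cvec_spec:
  assumes J: "J \<in> ksubsets (g+1) k"
  shows "\<forall>m\<in>{1..g+1}. BTc g (cvec g k J) m + svec k m = indic J m"
proof -
  note JS = ksubsetsD(1)[OF J] and card = ksubsetsD(2)[OF J] and IS = ksubsetsD(3)[OF J]
  define P where "P c \<longleftrightarrow> (\<forall>m\<in>{1..g+1}. BTc g c m + svec k m = indic J m) \<and>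
                          (\<forall>i. i \<notin> {1..g} \<longrightarrow> c i = 0)" for c
  \<comment> \<open>Forced by (B^T c)_(i+1) = -c_i.\<close>
  define c0 where "c0 i = (if i \<in> {1..g} then svec k (Suc i) - indic J (Suc i) else 0)" for i
  have "BTc g c0 m + svec k m = indic J m" if m: "m \<in> {1..g+1}" for m
  proof (cases m)
    case (Suc i)
    show ?thesis
    proof (cases "i = 0")
      case True
      have "BTc g c0 1 = (\<Sum>l=1..g. indic {1..k} (Suc l)) - (\<Sum>l=1..g. indic J (Suc l))"
        unfolding BTc_1 sum_subtractf[symmetric] by (simp add: c0_def svec_eq_indic)
      also have "\<dots> = indic J 1 - svec k 1"
        using sum_indic_Suc[OF IS] sum_indic_Suc[OF JS] card by (simp add: svec_eq_indic)
      finally show ?thesis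
        using Suc True by simp
    next
      case False
      then show ?thesis
        using Suc m by (simp add: BTc_Suc c0_def)
    qed
  qed (use m in simp)
  then have "P c0"
    by (simp add: P_def c0_def)
  moreover have "c = c0" if "P c" for c
  proof
    fix i
    show "c i = c0 i"
    proof (cases "i \<in> {1..g}")
      case True
      then have "BTc g c (Suc i) + svec k (Suc i) = indic J (Suc i)"
        using \<open>P c\<close> by (auto simp: P_def)
      then show ?thesis
        using True by (simp add: BTc_Suc c0_def)
    qed (use \<open>P c\<close> in \<open>auto simp: P_def c0_def\<close>)
  qed
  ultimately have "P (cvec g k J)"
    unfolding cvec_def P_def[symmetric] by (rule theI)
  then show ?thesis
    by (simp add: P_def)
qed

section \<open>Squared Vandermonde products as quadratic forms\<close>

definition vdm_pairs :: "nat \<Rightarrow> (nat \<times> nat) set" where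
  "vdm_pairs g = {(a,b). a \<in> {1..g+1} \<and> b \<in> {1..g+1} \<and> a < b}"

definition sq_diff :: "(nat \<Rightarrow> complex) \<Rightarrow> nat \<Rightarrow> nat \<Rightarrow> complex" where
  "sq_diff kap a b = (kap b - kap a)^2"

lemma sq_diff_nonzero:
  assumes "inj_on kap {1..g+1}" and "(a,b) \<in> vdm_pairs g"
  shows "sq_diff kap a b \<noteq> 0"
  using assms by (auto simp: sq_diff_def vdm_pairs_def dest: inj_onD)

lemma finite_vdm_pairs: "finite (vdm_pairs g)"
  by (rule finite_subset[of _ "{1..g+1} \<times> {1..g+1}"]) (auto simp: vdm_pairs_def)

lemma KJ_square:
  assumes "J \<subseteq> {1..g+1}"
  shows "KJ kap J ^ 2 = quad_prod (vdm_pairs g) (sq_diff kap) (indic J)"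
proof -
  have "KJ kap J ^ 2 = (\<Prod>(a,b)\<in>{(a,b). a \<in> J \<and> b \<in> J \<and> a < b}. sq_diff kap a b)"
    by (simp add: KJ_def sq_diff_def prod_power_distrib case_prod_unfold)
  also have "\<dots> = quad_prod (vdm_pairs g) (sq_diff kap) (indic J)"
    unfolding quad_prod_def
    by (rule prod.mono_neutral_cong_left[OF finite_vdm_pairs])
       (use assms in \<open>auto simp: vdm_pairs_def indic_def split: if_splits\<close>)
  finally show ?thesis .
qed

lemma KJ_nonzero:
  assumes "J \<subseteq> {1..g+1}" and "inj_on kap {1..g+1}"
  shows "KJ kap J \<noteq> 0"
proof -
  have "finite {(a,b). a \<in> J \<and> b \<in> J \<and> a < b}"
    by (rule finite_subset[of _ "J \<times> J"]) (use assms finite_subset in auto)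
  then show ?thesis
    using assms by (auto simp: KJ_def inj_on_def)
qed

lemma prod_vdm_pairs:
  "(\<Prod>(a,b)\<in>vdm_pairs g. F a b) =
   (\<Prod>i=1..g. F 1 (Suc i)) * (\<Prod>(i,j)\<in>{(i,j). 1 \<le> i \<and> i < j \<and> j \<le> g}. F (Suc i) (Suc j))"
proof -
  let ?P = "{(i,j). 1 \<le> i \<and> i < j \<and> j \<le> g}"
  have split: "vdm_pairs g = (\<lambda>i. (1, Suc i)) ` {1..g} \<union> (\<lambda>(i,j). (Suc i, Suc j)) ` ?P"
  proof (intro equalityI subsetI)
    fix x assume "x \<in> vdm_pairs g"
    then obtain a b where x: "x = (a,b)" "1 \<le> a" "a < b" "b \<le> g+1"
      by (auto simp: vdm_pairs_def)
    show "x \<in> (\<lambda>i. (1, Suc i)) ` {1..g} \<union> (\<lambda>(i,j). (Suc i, Suc j)) ` ?P"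
    proof (cases "a = 1")
      case True
      then show ?thesis
        using x by (intro UnI1 image_eqI[of _ _ "b - 1"]) auto
    next
      case False
      then show ?thesis
        using x by (intro UnI2 image_eqI[of _ _ "(a - 1, b - 1)"]) auto
    qed
  qed (auto simp: vdm_pairs_def)
  have "finite ?P"
    by (rule finite_subset[of _ "{1..g} \<times> {1..g}"]) auto
  then show ?thesis
    unfolding split by (subst prod.union_disjoint) (auto simp: prod.reindex inj_on_def case_prod_unfold)
qed

lemma a_coef_eq_quad_prod:
  assumes inj: "inj_on kap {1..g+1}"
  shows "a_coef g c kap = quad_prod (vdm_pairs g) (sq_diff kap) (BTc g c)"
proof -
  let ?P = "{(i,j). 1 \<le> i \<and> i < j \<and> j \<le> g}"
  define X where "X i = sq_diff kap 1 (Suc i)" for i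
  have X: "X i \<noteq> 0" if "i \<in> {1..g}" for i
    using sq_diff_nonzero[OF inj, of 1 "Suc i"] that by (simp add: X_def vdm_pairs_def)
  have diag: "(kap (i+1) - kap 1) powi (-2 * (c i)^2) = inverse (X i powi (c i * c i))" for i
  proof -
    have "-2 * (c i)^2 = 2 * - (c i * c i)"
      by (simp add: power2_eq_square)
    then show ?thesis
      by (simp add: X_def sq_diff_def power_int_mult power_int_minus)
  qed
  have off_diag: "((kap (i+1) - kap (j+1))^2 / ((kap (i+1) - kap 1)^2 * (kap (j+1) - kap 1)^2))
                    powi (c i * c j) =
                  sq_diff kap (Suc i) (Suc j) powi (c i * c j) * inverse ((X i * X j) powi (c i * c j))"
    for i j
    by (simp add: X_def sq_diff_def power2_commute[of "kap (Suc i)"] power_int_divide_distrib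
                  divide_inverse power_int_mult_distrib power_int_inverse)
  have "a_coef g c kap =
        (\<Prod>(i,j)\<in>?P. sq_diff kap (Suc i) (Suc j) powi (c i * c j)) *
        inverse ((\<Prod>i=1..g. X i powi (c i * c i)) * (\<Prod>(i,j)\<in>?P. (X i * X j) powi (c i * c j)))"
    unfolding a_coef_def diag off_diag by (simp add: prod.distrib prod_inversef[unfolded comp_def] case_prod_unfold)
  also have "\<dots> = (\<Prod>(i,j)\<in>?P. sq_diff kap (Suc i) (Suc j) powi (c i * c j)) *
                  (\<Prod>i=1..g. X i powi - (c i * (\<Sum>l=1..g. c l)))"
  proof -
    have sq: "(\<Prod>i=1..g. X i powi (c i * c i)) * (\<Prod>(i,j)\<in>?P. (X i * X j) powi (c i * c j)) =
              (\<Prod>i=1..g. X i powi (c i * (\<Sum>l=1..g. c l)))"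
      by (rule prod_power_int_sum_square[OF X])
    show ?thesis
      unfolding sq by (simp add: prod_inversef[unfolded comp_def] power_int_minus)
  qed
  also have "\<dots> = quad_prod (vdm_pairs g) (sq_diff kap) (BTc g c)"
    by (auto simp: quad_prod_def prod_vdm_pairs X_def BTc_1[unfolded One_nat_def] BTc_Suc mult.commute
             intro!: prod.cong arg_cong2[where f = "(*)"])
  finally show ?thesis .
qed

lemma polar_prod_BTc:
  assumes "\<And>a b. (a,b) \<in> P \<Longrightarrow> q a b \<noteq> 0"
  shows "polar_prod P q w (BTc g c) = (\<Prod>l=1..g. polar_prod P q w (Bmat l) powi c l)"
proof -
  have "BTc g c = (\<lambda>m. \<Sum>l\<in>{1..g}. c l * Bmat l m)"
    by (simp add: fun_eq_iff BTc_def mult.commute)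
  then show ?thesis
    using polar_prod_sum[OF assms, where w = w and L = "{1..g}" and c = c and z = Bmat] by simp
qed

lemma prod_lam_diag:
  assumes "S \<subseteq> {1..g+1}"
  shows "(\<Prod>j\<in>S. lam_diag lam j) = (\<Prod>l=1..g. lam l powi indic S (l+1))"
proof -
  have "(\<Prod>j\<in>S. lam_diag lam j) = (\<Prod>j\<in>{1..g+1} \<inter> S. lam_diag lam j)"
    by (simp only: Int_absorb1[OF assms])
  also have "\<dots> = (\<Prod>j=1..g+1. if j \<in> S then lam_diag lam j else 1)"
    by (rule prod.inter_restrict) simp
  also have "\<dots> = (\<Prod>l=1..g. lam l powi indic S (l+1))"
    unfolding prod_atLeast1_atMost_add1 by (auto simp: lam_diag_def indic_def intro!: prod.cong)
  finally show ?thesis .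
qed

lemma alpha_tilde_eq_alpha_tilde_expl:
  assumes ok: "params_ok g lam kap" and J: "J \<in> ksubsets (g+1) k"
  shows "alpha_tilde k lam kap J = alpha_tilde_expl g k lam kap J"
proof -
  note JS = ksubsetsD(1)[OF J] and card = ksubsetsD(2)[OF J] and IS = ksubsetsD(3)[OF J]
  have lam: "\<And>l. l \<in> {1..g} \<Longrightarrow> lam l \<noteq> 0" and inj: "inj_on kap {1..g+1}"
    using ok by (auto simp: params_ok_def)
  define LJ where "LJ = (\<Prod>j\<in>J. lam_diag lam j)"
  define LI where "LI = (\<Prod>j\<in>{1..k}. lam_diag lam j)"
  have minor_J: "minor k (Atilde lam kap) J = KJ kap J * LJ"
    using minor_Atilde[OF finite_subset[OF JS]] card by (simp add: LJ_def)
  have minor_I: "minor k (Atilde lam kap) {1..k} = KJ kap {1..k} * LI"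
    using minor_Atilde[of "{1..k}"] by (simp add: LI_def)
  have "LI \<noteq> 0"
    unfolding LI_def prod_lam_diag[OF IS] using lam by simp
  moreover have "KJ kap {1..k} \<noteq> 0"
    by (rule KJ_nonzero[OF IS inj])
  moreover have lam_prod: "(\<Prod>l=1..g. lam l powi BTc g (cvec g k J) (l+1)) = LJ / LI"
  proof -
    have "lam l powi BTc g (cvec g k J) (l+1) = lam l powi indic J (l+1) / lam l powi indic {1..k} (l+1)"
      if "l \<in> {1..g}" for l
    proof -
      have "BTc g (cvec g k J) (l+1) = indic J (l+1) - indic {1..k} (l+1)"
        using bspec[OF cvec_spec[OF J], of "l+1"] that by (simp add: svec_eq_indic eq_diff_eq)
      then show ?thesis
        using lam[OF that] by (simp add: power_int_diff)
    qed
    then have "(\<Prod>l=1..g. lam l powi BTc g (cvec g k J) (l+1)) =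
               (\<Prod>l=1..g. lam l powi indic J (l+1) / lam l powi indic {1..k} (l+1))"
      by (intro prod.cong) auto
    also have "\<dots> = LJ / LI"
      by (simp only: prod_dividef LJ_def LI_def prod_lam_diag[OF JS] prod_lam_diag[OF IS])
    finally show ?thesis .
  qed
  ultimately show ?thesis
    unfolding alpha_tilde_def alpha_tilde_expl_def minor_J minor_I lam_prod
    by (simp add: power2_eq_square field_simps)
qed

(* beta_l = beta_factor g k kap l / lambda_l is the change of torus coordinates. *)
definition beta_factor :: "nat \<Rightarrow> nat \<Rightarrow> (nat \<Rightarrow> complex) \<Rightarrow> nat \<Rightarrow> complex" where
  "beta_factor g k kap l = polar_prod (vdm_pairs g) (sq_diff kap) (svec k) (Bmat l)"

lemma beta_factor_nonzero:
  assumes "inj_on kap {1..g+1}"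
  shows "beta_factor g k kap l \<noteq> 0"
  unfolding beta_factor_def by (rule polar_prod_nonzero) (rule sq_diff_nonzero[OF assms])

lemma alpha_tilde_expl_eq_alpha_psi:
  assumes ok: "params_ok g lam kap" and J: "J \<in> ksubsets (g+1) k"
  shows "alpha_tilde_expl g k lam kap J = alpha_psi g k (\<lambda>l. beta_factor g k kap l / lam l) kap J"
proof -
  note JS = ksubsetsD(1)[OF J] and IS = ksubsetsD(3)[OF J]
  have inj: "inj_on kap {1..g+1}"
    using ok by (simp add: params_ok_def)
  note nonzero = sq_diff_nonzero[OF inj]
  define c where "c = cvec g k J"
  have KI: "KJ kap {1..k} ^ 2 = quad_prod (vdm_pairs g) (sq_diff kap) (svec k)"
    unfolding svec_eq_indic by (rule KJ_square[OF IS])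
  have "KJ kap J ^ 2 = quad_prod (vdm_pairs g) (sq_diff kap) (\<lambda>m. svec k m + BTc g c m)"
    unfolding KJ_square[OF JS] quad_prod_def
    using cvec_spec[OF J] by (intro prod.cong) (auto simp: vdm_pairs_def c_def add.commute)
  also have "\<dots> = KJ kap {1..k} ^ 2 * a_coef g c kap * (\<Prod>l=1..g. beta_factor g k kap l powi c l)"
    by (simp only: quad_prod_add[OF nonzero] KI a_coef_eq_quad_prod[OF inj] polar_prod_BTc[OF nonzero]
                   beta_factor_def)
  finally have KJ: "KJ kap J ^ 2 / KJ kap {1..k} ^ 2 = a_coef g c kap * (\<Prod>l=1..g. beta_factor g k kap l powi c l)"
    using KJ_nonzero[OF IS inj] by simp
  have "(\<Prod>l=1..g. lam l powi BTc g c (l+1)) = (\<Prod>l=1..g. inverse (lam l) powi c l)"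
    by (intro prod.cong) (simp_all add: BTc_Suc power_int_minus power_int_inverse)
  then show ?thesis
    unfolding alpha_tilde_expl_def alpha_psi_def KJ c_def[symmetric]
    by (simp add: power_int_divide_distrib divide_inverse prod.distrib power_int_mult_distrib mult_ac)
qed

lemma alpha_tilde_eq_alpha_psi:
  assumes "params_ok g lam kap" and "J \<in> ksubsets (g+1) k"
  shows "alpha_tilde k lam kap J = alpha_psi g k (\<lambda>l. beta_factor g k kap l / lam l) kap J"
  using alpha_tilde_eq_alpha_tilde_expl[OF assms] alpha_tilde_expl_eq_alpha_psi[OF assms] by simp

lemma cone_pt_cong:
  assumes "\<And>J. J \<in> ksubsets (g+1) k \<Longrightarrow> a J = a' J"
  shows "cone_pt g k a kap t = cone_pt g k a' kap t"
  using assms by (auto simp: cone_pt_def fun_eq_iff split: coord.splits)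

lemma alpha_psi_cong:
  assumes "\<And>l. l \<in> {1..g} \<Longrightarrow> beta l = beta' l"
  shows "alpha_psi g k beta kap = alpha_psi g k beta' kap"
  using assms by (auto simp: alpha_psi_def fun_eq_iff intro!: prod.cong)

lemma psi_tilde_cone_eq_psi_cone: "psi_tilde_cone g k = psi_cone g k"
proof (intro equalityI subsetI)
  fix x assume "x \<in> psi_tilde_cone g k"
  then obtain lam kap t where x: "x = cone_pt g k (alpha_tilde k lam kap) kap t"
    and ok: "params_ok g lam kap" and "t \<noteq> 0"
    by (auto simp: psi_tilde_cone_def)
  moreover have "params_ok g (\<lambda>l. beta_factor g k kap l / lam l) kap"
    using ok beta_factor_nonzero by (auto simp: params_ok_def)
  moreover have "x = cone_pt g k (alpha_psi g k (\<lambda>l. beta_factor g k kap l / lam l) kap) kap t"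
    unfolding x using ok by (intro cone_pt_cong alpha_tilde_eq_alpha_psi)
  ultimately show "x \<in> psi_cone g k"
    unfolding psi_cone_def by blast
next
  fix x assume "x \<in> psi_cone g k"
  then obtain beta kap t where x: "x = cone_pt g k (alpha_psi g k beta kap) kap t"
    and ok: "params_ok g beta kap" and "t \<noteq> 0"
    by (auto simp: psi_cone_def)
  define lam where "lam l = beta_factor g k kap l / beta l" for l
  have f: "\<And>l. beta_factor g k kap l \<noteq> 0"
    using ok beta_factor_nonzero by (auto simp: params_ok_def)
  have ok': "params_ok g lam kap"
    using ok f by (auto simp: params_ok_def lam_def)
  have "alpha_psi g k beta kap = alpha_psi g k (\<lambda>l. beta_factor g k kap l / lam l) kap"
    using ok f by (intro alpha_psi_cong) (auto simp: params_ok_def lam_def)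
  then have "x = cone_pt g k (alpha_tilde k lam kap) kap t"
    unfolding x using ok' by (intro cone_pt_cong) (simp add: alpha_tilde_eq_alpha_psi)
  with ok' \<open>t \<noteq> 0\<close> show "x \<in> psi_tilde_cone g k"
    unfolding psi_tilde_cone_def by blast
qed

theorem theorem5p10:
  fixes g k :: nat
  assumes "1 \<le> g" and "1 \<le> k" and "k \<le> g"
  shows "(\<forall>lam kap J. params_ok g lam kap \<and> J \<in> ksubsets (g+1) k \<longrightarrow>
            alpha_tilde k lam kap J = alpha_tilde_expl g k lam kap J)
       \<and> zariski_closure (coords g k) (psi_tilde_cone g k) \<inter> target g k
         = zariski_closure (coords g k) (psi_cone g k) \<inter> target g k"
  using alpha_tilde_eq_alpha_tilde_expl psi_tilde_cone_eq_psi_cone by auto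

end
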